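(* Let $M,K\ge 1$, $\mathcal K=\{1,\dots,K\}$, channels $\mathbf h_1,\dots,\mathbf h_K\in\mathbb C^{M}$, power budget $P>0$, weights $\mathbf u=(u_1,\dots,u_K)\in\mathbb R_{\ge 0}^K\setminus\{\mathbf 0\}$, $\mu\ge 0$, $P_c>0$ and rate thresholds $R_k^{th}\ge 0$ be given. For precoders $\mathbf p_c,\mathbf p_1,\dots,\mathbf p_K\in\mathbb C^M$ define $$\gamma_{c,k}=\frac{|\mathbf h_k^H\mathbf p_c|^2}{\sum_{j\in\mathcal K}|\mathbf h_k^H\mathbf p_j|^2+1},\qquad \gamma_{p,k}=\frac{|\mathbf h_k^H\mathbf p_k|^2}{\sum_{j\in\mathcal K\setminus\{k\}}|\mathbf h_k^H\mathbf p_j|^2+1},$$ and let $\Phi(\mathbf p,\mathbf c,\boldsymbol\gamma_p)=\dfrac{\sum_{k\in\mathcal K}u_k\big(C_k+\log(1+\gamma_{p,k})\big)}{\mu\big(\|\mathbf p_c\|^2+\sum_{k}\|\mathbf p_k\|^2\big)+P_c}$. Problem (A): maximize $\Phi$ over $\mathbf p_c,\mathbf p_1,\dots,\mathbf p_K$, $\mathbf c=(C_1,\dots,C_K)\in\mathbb R^K$, $\boldsymbol\gamma_c,\boldsymbol\gamma_p$ subject to: $\gamma_{c,k},\gamma_{p,k}$ given by the SINR formulas above; $\sum_{k'\in\mathcal K}C_{k'}\le\log(1+\gamma_{c,k})$ for all $k$; $C_k\ge\max\{0,R_k^{th}-\log(1+\gamma_{p,k})\}$ for all $k$; $\|\mathbf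 p_c\|^2+\sum_k\|\mathbf p_k\|^2\le P$. Problem (B): maximize $\Phi$ over $\mathbf p_c,\mathbf p_1,\dots,\mathbf p_K$, $\mathbf c\in\mathbb R^K$, $\boldsymbol\gamma_p\in\mathbb R_{\ge0}^K$, $s\ge 0$, $d_k\in\mathbb R$ and $e_k\in\mathbb C$ ($k=2,\dots,K$), subject to: (i) $\sqrt{\gamma_{p,k}}\big(\sum_{j\ne k}|\mathbf h_k^H\mathbf p_j|^2+1\big)^{1/2}\le \mathbf h_k^H\mathbf p_k$ for all $k$; (ii) $\sqrt{s}\big(\sum_{j\in\mathcal K}|\mathbf h_1^H\mathbf p_j|^2+1\big)^{1/2}\le\mathbf h_1^H\mathbf p_c$; (iii) $\sqrt{s}\big(\sum_{j\in\mathcal K}|\mathbf h_k^H\mathbf p_j|^2+1\big)^{1/2}\le d_k$ for all $k>1$; (iv) $d_k\le|e_k|$ for all $k>1$; (v) $\operatorname{Re}\{\mathbf h_k^H\mathbf p_k\}\ge 0$, $\operatorname{Im}\{\mathbf h_k^H\mathbf p_k\}=0$ for all $k$; (vi) $\operatorname{Re}\{\mathbf h_1^H\mathbf p_c\}\ge0$, $\operatorname{Im}\{\mathbf h_1^H\mathbf p_c\}=0$; (vii) $d_k\ge 0$ and $e_k=\mathbf h_k^H\mathbf p_c$ for all $k>1$; (viii) $\sum_{k}C_k\le\log(1+s)$; (ix) $C_k\ge\max\{0,R_k^{th}-\log(1+\gamma_{p,k})\}$ for all $k$, and $\|\mathbf p_c\|^2+\sum_k\|\mathbf p_k\|^2\le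 P$. (In (B), $\gamma_{p,k}$ is a free variable, not defined by the SINR formula.) Then problems (A) and (B) have the same optimal value, and for every optimal solution $(\mathbf p_c,\mathbf p_1,\dots,\mathbf p_K,\mathbf c,\boldsymbol\gamma_p,s,\mathbf d,\mathbf e)$ of (B), the precoders $(\mathbf p_c,\mathbf p_1,\dots,\mathbf p_K)$ together with $\mathbf c$ and the SINRs $\gamma_{c,k},\gamma_{p,k}$ computed from these precoders by the formulas above form an optimal solution of (A).
   Context: Rate-splitting downlink model: a base station with $M$ antennas serves $K$ single-antenna users with channels $\mathbf h_k$; $\mathbf p_c$ is the common-message precoder and $\mathbf p_k$ the private precoder of user $k$; $C_k$ is the portion of the common rate allocated to user $k$. Logarithms are base 2. Inequalities involving complex quantities such as $\mathbf h_k^H\mathbf p_k$ are meaningful because the constraints force these quantities to be real. *)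

theory Defs
  imports "HOL-Analysis.Analysis"
begin

text \<open>Users are indexed by {1..K} (naturals); vectors in C^M are complex ^ 'm.
  Values of index-functions outside {1..K} are irrelevant.\<close>

definition herm :: "complex ^ 'm \<Rightarrow> complex ^ 'm \<Rightarrow> complex" where
  "herm h q = (\<Sum>i\<in>UNIV. cnj (h $ i) * q $ i)"

definition gamma_c :: "nat \<Rightarrow> (nat \<Rightarrow> complex ^ 'm) \<Rightarrow> complex ^ 'm \<Rightarrow> (nat \<Rightarrow> complex ^ 'm) \<Rightarrow> nat \<Rightarrow> real" where
  "gamma_c K h pc p k =
     (cmod (herm (h k) pc))\<^sup>2 / ((\<Sum>j\<in>{1..K}. (cmod (herm (h k) (p j)))\<^sup>2) + 1)"

definition gamma_p :: "nat \<Rightarrow> (nat \<Rightarrow> complex ^ 'm) \<Rightarrow> (nat \<Rightarrow> complex ^ 'm) \<Rightarrow> nat \<Rightarrow> real" where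
  "gamma_p K h p k =
     (cmod (herm (h k) (p k)))\<^sup>2 / ((\<Sum>j\<in>{1..K}-{k}. (cmod (herm (h k) (p j)))\<^sup>2) + 1)"

definition totpow :: "nat \<Rightarrow> complex ^ 'm \<Rightarrow> (nat \<Rightarrow> complex ^ 'm) \<Rightarrow> real" where
  "totpow K pc p = (norm pc)\<^sup>2 + (\<Sum>k\<in>{1..K}. (norm (p k))\<^sup>2)"

definition Phi :: "nat \<Rightarrow> (nat \<Rightarrow> real) \<Rightarrow> real \<Rightarrow> real \<Rightarrow> complex ^ 'm \<Rightarrow> (nat \<Rightarrow> complex ^ 'm)
                    \<Rightarrow> (nat \<Rightarrow> real) \<Rightarrow> (nat \<Rightarrow> real) \<Rightarrow> real" where
  "Phi K u mu Pc pc p c gp =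
     (\<Sum>k\<in>{1..K}. u k * (c k + log 2 (1 + gp k))) / (mu * totpow K pc p + Pc)"

definition feasA :: "nat \<Rightarrow> (nat \<Rightarrow> complex ^ 'm) \<Rightarrow> real \<Rightarrow> (nat \<Rightarrow> real)
     \<Rightarrow> complex ^ 'm \<Rightarrow> (nat \<Rightarrow> complex ^ 'm) \<Rightarrow> (nat \<Rightarrow> real) \<Rightarrow> (nat \<Rightarrow> real) \<Rightarrow> (nat \<Rightarrow> real) \<Rightarrow> bool" where
  "feasA K h P Rth pc p c gc gp \<longleftrightarrow>
     (\<forall>k\<in>{1..K}. gc k = gamma_c K h pc p k) \<and>
     (\<forall>k\<in>{1..K}. gp k = gamma_p K h p k) \<and>
     (\<forall>k\<in>{1..K}. (\<Sum>k'\<in>{1..K}. c k') \<le> log 2 (1 + gc k)) \<and>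
     (\<forall>k\<in>{1..K}. c k \<ge> max 0 (Rth k - log 2 (1 + gp k))) \<and>
     totpow K pc p \<le> P"

text \<open>Feasible set of problem (B). Complex-valued inequalities are read on real parts,
  the imaginary parts being forced to 0 by (v),(vi).\<close>
definition feasB :: "nat \<Rightarrow> (nat \<Rightarrow> complex ^ 'm) \<Rightarrow> real \<Rightarrow> (nat \<Rightarrow> real)
     \<Rightarrow> complex ^ 'm \<Rightarrow> (nat \<Rightarrow> complex ^ 'm) \<Rightarrow> (nat \<Rightarrow> real) \<Rightarrow> (nat \<Rightarrow> real) \<Rightarrow> real
     \<Rightarrow> (nat \<Rightarrow> real) \<Rightarrow> (nat \<Rightarrow> complex) \<Rightarrow> bool" where
  "feasB K h P Rth pc p c gp s d e \<longleftrightarrow>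
     (\<forall>k\<in>{1..K}. gp k \<ge> 0) \<and> s \<ge> 0 \<and>
     (\<forall>k\<in>{1..K}. sqrt (gp k) * sqrt ((\<Sum>j\<in>{1..K}-{k}. (cmod (herm (h k) (p j)))\<^sup>2) + 1)
                    \<le> Re (herm (h k) (p k))) \<and>
     sqrt s * sqrt ((\<Sum>j\<in>{1..K}. (cmod (herm (h 1) (p j)))\<^sup>2) + 1) \<le> Re (herm (h 1) pc) \<and>
     (\<forall>k\<in>{2..K}. sqrt s * sqrt ((\<Sum>j\<in>{1..K}. (cmod (herm (h k) (p j)))\<^sup>2) + 1) \<le> d k) \<and>
     (\<forall>k\<in>{2..K}. d k \<le> cmod (e k)) \<and>
     (\<forall>k\<in>{1..K}. Re (herm (h k) (p k)) \<ge> 0 \<and> Im (herm (h k) (p k)) = 0) \<and>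
     Re (herm (h 1) pc) \<ge> 0 \<and> Im (herm (h 1) pc) = 0 \<and>
     (\<forall>k\<in>{2..K}. d k \<ge> 0 \<and> e k = herm (h k) pc) \<and>
     (\<Sum>k\<in>{1..K}. c k) \<le> log 2 (1 + s) \<and>
     (\<forall>k\<in>{1..K}. c k \<ge> max 0 (Rth k - log 2 (1 + gp k))) \<and>
     totpow K pc p \<le> P"

definition valA where
  "valA K h P u mu Pc Rth =
     Sup {ereal (Phi K u mu Pc pc p c gp) | pc p c gc gp. feasA K h P Rth pc p c gc gp}"

definition valB where
  "valB K h P u mu Pc Rth =
     Sup {ereal (Phi K u mu Pc pc p c gp) | pc p c gp s d e. feasB K h P Rth pc p c gp s d e}"

definition optA where
  "optA K h P u mu Pc Rth pc p c gc gp \<longleftrightarrow> feasA K h P Rth pc p c gc gp \<and>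
     (\<forall>pc' p' c' gc' gp'. feasA K h P Rth pc' p' c' gc' gp' \<longrightarrow>
        Phi K u mu Pc pc' p' c' gp' \<le> Phi K u mu Pc pc p c gp)"

definition optB where
  "optB K h P u mu Pc Rth pc p c gp s d e \<longleftrightarrow> feasB K h P Rth pc p c gp s d e \<and>
     (\<forall>pc' p' c' gp' s' d' e'. feasB K h P Rth pc' p' c' gp' s' d' e' \<longrightarrow>
        Phi K u mu Pc pc' p' c' gp' \<le> Phi K u mu Pc pc p c gp)"

end

theory Submission
  imports Defs
begin

text \<open>The cone constraints of (B) say exactly \<open>sqrt g * sqrt D \<le> a\<close> with \<open>a\<close> the
  modulus of the effective channel gain and \<open>D\<close> the interference-plus-noise term, i.e.
  \<open>g \<le> a\<^sup>2 / D\<close>: the variables \<open>\<gamma>\<^sub>p\<^sub>,\<^sub>k\<close> and \<open>s\<close> of (B) are lower bounds of the private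
  SINRs and of all common SINRs. As \<open>\<Phi>\<close> and the rate constraints are monotone in these
  variables, replacing them by the true SINRs turns a feasible point of (B) into one of (A)
  with at least the same objective. Conversely, rotating each precoder by a unit complex
  number changes no SINR and no power but makes \<open>h\<^sub>k\<^sup>H p\<^sub>k\<close> and \<open>h\<^sub>1\<^sup>H p\<^sub>c\<close> real and
  nonnegative; with \<open>s = min\<^sub>k \<gamma>\<^sub>c\<^sub>,\<^sub>k\<close> this gives a point of (B) with the same objective.\<close>

lemma sqrt_mult_sqrt_le_iff:
  fixes g D a :: real
  assumes "g \<ge> 0" "D > 0" "a \<ge> 0"
  shows "sqrt g * sqrt D \<le> a \<longleftrightarrow> g \<le> a\<^sup>2 / D"
proof -
  have "sqrt g * sqrt D \<le> a \<longleftrightarrow> sqrt (g * D) \<le> sqrt (a\<^sup>2)"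
    using assms by (simp add: real_sqrt_mult)
  also have "\<dots> \<longleftrightarrow> g * D \<le> a\<^sup>2" by (rule real_sqrt_le_iff)
  also have "\<dots> \<longleftrightarrow> g \<le> a\<^sup>2 / D" using assms by (simp add: pos_le_divide_eq)
  finally show ?thesis .
qed

lemma sum_squares_plus_one_pos: "(\<Sum>j\<in>A. (f j)\<^sup>2) + 1 > (0::real)"
  by (simp add: add_nonneg_pos sum_nonneg)

lemma gamma_c_nonneg: "gamma_c K h pc p k \<ge> 0"
  by (simp add: gamma_c_def sum_nonneg)

lemma gamma_p_nonneg: "gamma_p K h p k \<ge> 0"
  by (simp add: gamma_p_def sum_nonneg)

lemma totpow_nonneg: "totpow K pc p \<ge> 0"
  by (simp add: totpow_def sum_nonneg)

lemma log2_one_plus_mono: "0 \<le> a \<Longrightarrow> a \<le> b \<Longrightarrow> log 2 (1 + a) \<le> log 2 (1 + b)"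
  by simp

lemma Phi_mono:
  assumes "\<forall>k\<in>{1..K}. 0 \<le> gp k \<and> gp k \<le> gp' k" "\<forall>k\<in>{1..K}. u k \<ge> 0"
    and "mu \<ge> 0" "Pc > 0"
  shows "Phi K u mu Pc pc p c gp \<le> Phi K u mu Pc pc p c gp'"
proof -
  have "(\<Sum>k\<in>{1..K}. u k * (c k + log 2 (1 + gp k)))
          \<le> (\<Sum>k\<in>{1..K}. u k * (c k + log 2 (1 + gp' k)))"
    using assms(1,2) by (intro sum_mono mult_left_mono add_left_mono log2_one_plus_mono) auto
  moreover have "mu * totpow K pc p + Pc > 0"
    by (simp add: add_nonneg_pos mult_nonneg_nonneg totpow_nonneg assms(3,4))
  ultimately show ?thesis
    unfolding Phi_def by (simp add: divide_right_mono)
qed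

lemma feasB_gp_le_gamma_p:
  assumes "feasB K h P Rth pc p c gp s d e" "k \<in> {1..K}"
  shows "gp k \<le> gamma_p K h p k"
proof -
  have "gp k \<ge> 0"
    and cone: "sqrt (gp k) * sqrt ((\<Sum>j\<in>{1..K}-{k}. (cmod (herm (h k) (p j)))\<^sup>2) + 1)
                 \<le> Re (herm (h k) (p k))"
    and "Re (herm (h k) (p k)) \<ge> 0" "Im (herm (h k) (p k)) = 0"
    using assms by (auto simp: feasB_def)
  then have "Re (herm (h k) (p k)) = cmod (herm (h k) (p k))"
    by (simp add: cmod_eq_Re)
  with cone \<open>gp k \<ge> 0\<close> show ?thesis
    unfolding gamma_p_def by (simp add: sqrt_mult_sqrt_le_iff sum_squares_plus_one_pos)
qed

lemma feasB_s_le_gamma_c: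
  assumes "feasB K h P Rth pc p c gp s d e" "k \<in> {1..K}"
  shows "s \<le> gamma_c K h pc p k"
proof -
  let ?D = "(\<Sum>j\<in>{1..K}. (cmod (herm (h k) (p j)))\<^sup>2) + 1"
  have "s \<ge> 0" using assms(1) by (simp add: feasB_def)
  have "sqrt s * sqrt ?D \<le> cmod (herm (h k) pc)"
  proof (cases "k = 1")
    case True
    then have "sqrt s * sqrt ?D \<le> Re (herm (h k) pc)"
      "Re (herm (h k) pc) \<ge> 0" "Im (herm (h k) pc) = 0"
      using assms(1) by (auto simp: feasB_def)
    then show ?thesis by (simp add: cmod_eq_Re)
  next
    case False
    with assms(2) have "k \<in> {2..K}" by simp
    with assms(1) have "sqrt s * sqrt ?D \<le> d k" "d k \<le> cmod (e k)" "e k = herm (h k) pc"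
      unfolding feasB_def by blast+
    then show ?thesis by simp
  qed
  with \<open>s \<ge> 0\<close> show ?thesis
    unfolding gamma_c_def by (simp add: sqrt_mult_sqrt_le_iff sum_squares_plus_one_pos)
qed

lemma feasB_imp_feasA:
  assumes B: "feasB K h P Rth pc p c gp s d e"
  shows "feasA K h P Rth pc p c (gamma_c K h pc p) (gamma_p K h p)"
  unfolding feasA_def
proof (intro conjI ballI)
  fix k assume k: "k \<in> {1..K}"
  have "s \<ge> 0" "(\<Sum>k'\<in>{1..K}. c k') \<le> log 2 (1 + s)"
    using B by (simp_all add: feasB_def)
  with log2_one_plus_mono[OF _ feasB_s_le_gamma_c[OF B k]]
  show "(\<Sum>k'\<in>{1..K}. c k') \<le> log 2 (1 + gamma_c K h pc p k)"
    by linarith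
  have "gp k \<ge> 0" "c k \<ge> max 0 (Rth k - log 2 (1 + gp k))"
    using B k by (simp_all add: feasB_def)
  with log2_one_plus_mono[OF _ feasB_gp_le_gamma_p[OF B k]]
  show "c k \<ge> max 0 (Rth k - log 2 (1 + gamma_p K h p k))"
    by fastforce
next
  show "totpow K pc p \<le> P" using B by (simp add: feasB_def)
qed simp_all

lemma feasB_Phi_le:
  assumes "feasB K h P Rth pc p c gp s d e" "\<forall>k\<in>{1..K}. u k \<ge> 0" "mu \<ge> 0" "Pc > 0"
  shows "Phi K u mu Pc pc p c gp \<le> Phi K u mu Pc pc p c (gamma_p K h p)"
proof (rule Phi_mono)
  show "\<forall>k\<in>{1..K}. 0 \<le> gp k \<and> gp k \<le> gamma_p K h p k"
    using assms(1) feasB_gp_le_gamma_p[OF assms(1)] by (simp add: feasB_def)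
qed (use assms in auto)

lemma herm_vector_smult: "herm g (w *s x) = w * herm g x"
  by (simp add: herm_def sum_distrib_left algebra_simps)

lemma norm_vector_smult: "norm (w *s x :: complex ^ 'n) = cmod w * norm x"
  by (simp add: norm_vec_def norm_mult L2_set_right_distrib)

lemma cis_neg_Arg_mult: "cis (- Arg z) * z = of_real (cmod z)"
proof -
  have "cis (- Arg z) * z = cis (- Arg z) * rcis (cmod z) (Arg z)"
    by (simp add: rcis_cmod_Arg)
  also have "\<dots> = of_real (cmod z)" by (simp add: rcis_def cis_mult)
  finally show ?thesis .
qed

lemma
  assumes "cmod w = 1" "\<And>k. cmod (v k) = 1"
  shows gamma_c_unit_smult: "gamma_c K h (w *s pc) (\<lambda>k. v k *s p k) = gamma_c K h pc p"
    and gamma_p_unit_smult: "gamma_p K h (\<lambda>k. v k *s p k) = gamma_p K h p"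
    and totpow_unit_smult: "totpow K (w *s pc) (\<lambda>k. v k *s p k) = totpow K pc p"
  using assms
  by (simp_all add: fun_eq_iff gamma_c_def gamma_p_def totpow_def herm_vector_smult
      norm_mult norm_vector_smult)

lemma le_gamma_c_imp_cone:
  assumes "s \<ge> 0" "s \<le> gamma_c K h pc p k"
  shows "sqrt s * sqrt ((\<Sum>j\<in>{1..K}. (cmod (herm (h k) (p j)))\<^sup>2) + 1) \<le> cmod (herm (h k) pc)"
  using assms unfolding gamma_c_def
  by (simp add: sqrt_mult_sqrt_le_iff sum_squares_plus_one_pos)

lemma gamma_p_cone:
  "sqrt (gamma_p K h p k) * sqrt ((\<Sum>j\<in>{1..K}-{k}. (cmod (herm (h k) (p j)))\<^sup>2) + 1)
     \<le> cmod (herm (h k) (p k))"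
  using gamma_p_nonneg[of K h p k] unfolding gamma_p_def
  by (simp add: sqrt_mult_sqrt_le_iff sum_squares_plus_one_pos)

lemma feasA_imp_feasB_real_gains:
  assumes A: "feasA K h P Rth pc p c gc gp"
    and real_c: "herm (h 1) pc = of_real (cmod (herm (h 1) pc))"
    and real_p: "\<And>k. herm (h k) (p k) = of_real (cmod (herm (h k) (p k)))"
    and "K \<ge> 1"
  shows "feasB K h P Rth pc p c (gamma_p K h p) (Min (gamma_c K h pc p ` {1..K}))
           (\<lambda>k. cmod (herm (h k) pc)) (\<lambda>k. herm (h k) pc)"
proof -
  define s where "s = Min (gamma_c K h pc p ` {1..K})"
  have s_le: "s \<le> gamma_c K h pc p k" if "k \<in> {1..K}" for k
    unfolding s_def using that by simp
  have "s \<in> gamma_c K h pc p ` {1..K}"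
    unfolding s_def using \<open>K \<ge> 1\<close> by (intro Min_in) auto
  then obtain k0 where k0: "k0 \<in> {1..K}" "s = gamma_c K h pc p k0" by blast
  have "s \<ge> 0" using k0 gamma_c_nonneg by simp
  have cone_c: "sqrt s * sqrt ((\<Sum>j\<in>{1..K}. (cmod (herm (h k) (p j)))\<^sup>2) + 1)
                  \<le> cmod (herm (h k) pc)" if "k \<in> {1..K}" for k
    using \<open>s \<ge> 0\<close> s_le[OF that] by (rule le_gamma_c_imp_cone)
  have re_c: "Re (herm (h 1) pc) = cmod (herm (h 1) pc)" "Im (herm (h 1) pc) = 0"
    by (subst real_c; simp)+
  have re_p: "Re (herm (h k) (p k)) = cmod (herm (h k) (p k))" "Im (herm (h k) (p k)) = 0" for k
    by (subst real_p; simp)+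
  show ?thesis
    unfolding feasB_def s_def[symmetric]
  proof (intro conjI ballI)
    show "(\<Sum>k'\<in>{1..K}. c k') \<le> log 2 (1 + s)"
      using A k0 unfolding feasA_def by metis
    show "c k \<ge> max 0 (Rth k - log 2 (1 + gamma_p K h p k))" if "k \<in> {1..K}" for k
      using A that unfolding feasA_def by metis
    show "sqrt s * sqrt ((\<Sum>j\<in>{1..K}. (cmod (herm (h 1) (p j)))\<^sup>2) + 1) \<le> Re (herm (h 1) pc)"
      unfolding re_c using cone_c[of 1] \<open>K \<ge> 1\<close> by simp
    show "totpow K pc p \<le> P" using A by (simp add: feasA_def)
    show "sqrt s * sqrt ((\<Sum>j\<in>{1..K}. (cmod (herm (h k) (p j)))\<^sup>2) + 1) \<le> cmod (herm (h k) pc)"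
      if "k \<in> {2..K}" for k
      using that by (intro cone_c) simp
    show "sqrt (gamma_p K h p k) * sqrt ((\<Sum>j\<in>{1..K}-{k}. (cmod (herm (h k) (p j)))\<^sup>2) + 1)
            \<le> Re (herm (h k) (p k))" for k
      unfolding re_p by (rule gamma_p_cone)
    show "Re (herm (h 1) pc) \<ge> 0" "Im (herm (h 1) pc) = 0"
      using re_c by simp_all
  qed (simp_all add: \<open>s \<ge> 0\<close> gamma_p_nonneg re_c re_p)
qed

lemma feasA_imp_feasB:
  assumes A: "feasA K h P Rth pc p c gc gp" and "K \<ge> 1"
  shows "\<exists>pc' p' gp' s d e. feasB K h P Rth pc' p' c gp' s d e \<and>
           Phi K u mu Pc pc' p' c gp' = Phi K u mu Pc pc p c gp"
proof -
  define w where "w = cis (- Arg (herm (h 1) pc))"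
  define v where "v k = cis (- Arg (herm (h k) (p k)))" for k
  define pc' where "pc' = w *s pc"
  define p' where "p' k = v k *s p k" for k
  have unit: "cmod w = 1" "\<And>k. cmod (v k) = 1" by (simp_all add: w_def v_def)
  note invariant = gamma_c_unit_smult[OF unit] gamma_p_unit_smult[OF unit]
    totpow_unit_smult[OF unit]
  have "feasA K h P Rth pc' p' c gc gp"
    using A unfolding feasA_def pc'_def p'_def invariant .
  moreover have "herm (h 1) pc' = of_real (cmod (herm (h 1) pc'))"
    "\<And>k. herm (h k) (p' k) = of_real (cmod (herm (h k) (p' k)))"
    by (simp_all add: pc'_def p'_def w_def v_def herm_vector_smult cis_neg_Arg_mult
        norm_mult)
  ultimately have "feasB K h P Rth pc' p' c (gamma_p K h p') (Min (gamma_c K h pc' p' ` {1..K}))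
      (\<lambda>k. cmod (herm (h k) pc')) (\<lambda>k. herm (h k) pc')"
    using \<open>K \<ge> 1\<close> by (rule feasA_imp_feasB_real_gains)
  moreover have "Phi K u mu Pc pc' p' c (gamma_p K h p') = Phi K u mu Pc pc p c gp"
    using A unfolding Phi_def pc'_def p'_def invariant
    by (auto simp: feasA_def intro!: sum.cong)
  ultimately show ?thesis by blast
qed

lemma valA_eq_valB:
  assumes "K \<ge> 1" "\<forall>k\<in>{1..K}. u k \<ge> 0" "mu \<ge> 0" "Pc > 0"
  shows "valA K h P u mu Pc Rth = valB K h P u mu Pc Rth"
  unfolding valA_def valB_def
proof (rule antisym; rule Sup_mono; safe)
  fix pc p c gc gp assume "feasA K h P Rth pc p c gc gp"
  then obtain pc' p' gp' s d e where "feasB K h P Rth pc' p' c gp' s d e"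
    "Phi K u mu Pc pc' p' c gp' = Phi K u mu Pc pc p c gp"
    using feasA_imp_feasB \<open>K \<ge> 1\<close> by metis
  then show "\<exists>b\<in>{ereal (Phi K u mu Pc pc p c gp) | pc p c gp s d e.
               feasB K h P Rth pc p c gp s d e}. ereal (Phi K u mu Pc pc p c gp) \<le> b"
    by (metis (mono_tags, lifting) mem_Collect_eq order_refl)
next
  fix pc p c gp s d e assume B: "feasB K h P Rth pc p c gp s d e"
  with feasB_imp_feasA[OF B] feasB_Phi_le[OF B assms(2-4)]
  show "\<exists>b\<in>{ereal (Phi K u mu Pc pc p c gp) | pc p c gc gp.
               feasA K h P Rth pc p c gc gp}. ereal (Phi K u mu Pc pc p c gp) \<le> b"
    by (metis (mono_tags, lifting) ereal_less_eq(3) mem_Collect_eq)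
qed

lemma optB_imp_optA:
  assumes opt: "optB K h P u mu Pc Rth pc p c gp s d e"
    and "K \<ge> 1" "\<forall>k\<in>{1..K}. u k \<ge> 0" "mu \<ge> 0" "Pc > 0"
  shows "optA K h P u mu Pc Rth pc p c (gamma_c K h pc p) (gamma_p K h p)"
  unfolding optA_def
proof (intro conjI allI impI)
  have B: "feasB K h P Rth pc p c gp s d e" using opt by (simp add: optB_def)
  then show "feasA K h P Rth pc p c (gamma_c K h pc p) (gamma_p K h p)"
    by (rule feasB_imp_feasA)
  fix pc' p' c' gc' gp' assume "feasA K h P Rth pc' p' c' gc' gp'"
  then obtain pc'' p'' gp'' s'' d'' e'' where "feasB K h P Rth pc'' p'' c' gp'' s'' d'' e''"
    and "Phi K u mu Pc pc'' p'' c' gp'' = Phi K u mu Pc pc' p' c' gp'"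
    using feasA_imp_feasB \<open>K \<ge> 1\<close> by metis
  with opt have "Phi K u mu Pc pc' p' c' gp' \<le> Phi K u mu Pc pc p c gp"
    unfolding optB_def by metis
  also have "\<dots> \<le> Phi K u mu Pc pc p c (gamma_p K h p)"
    using B assms(3-5) by (rule feasB_Phi_le)
  finally show "Phi K u mu Pc pc' p' c' gp' \<le> Phi K u mu Pc pc p c (gamma_p K h p)" .
qed

theorem proposition1:
  fixes K :: nat and h :: "nat \<Rightarrow> complex ^ 'm" and P mu Pc :: real
    and u Rth :: "nat \<Rightarrow> real"
  assumes "K \<ge> 1" and "P > 0" and "\<forall>k\<in>{1..K}. u k \<ge> 0" and "\<exists>k\<in>{1..K}. u k \<noteq> 0"
    and "mu \<ge> 0" and "Pc > 0" and "\<forall>k\<in>{1..K}. Rth k \<ge> 0"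
  shows "valA K h P u mu Pc Rth = valB K h P u mu Pc Rth \<and>
    (\<forall>pc p c gp s d e. optB K h P u mu Pc Rth pc p c gp s d e \<longrightarrow>
        optA K h P u mu Pc Rth pc p c (gamma_c K h pc p) (gamma_p K h p))"
  using assms(1,3,5,6) by (simp add: valA_eq_valB optB_imp_optA)

end
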